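(* Let $\Omega,\Omega^*\subset\widehat{\mathbb C}$ be domains each containing $\infty$, and let $f\colon\Omega\to\Omega^*$ be a homeomorphism with $f(\infty)=\infty$. Suppose that each boundary component of $\Omega$ is a Jordan curve or a single point and that for each $\varepsilon>0$ there are at most finitely many Jordan curves in $\partial\Omega$ with diameter greater than $\varepsilon$. Then for every $z_0\in\partial\Omega$, the cluster set $\mathrm{Clu}(f;z_0)$ is a continuum (possibly degenerate).
   Context: The cluster set of $f$ at $z_0\in\partial\Omega$ is $\mathrm{Clu}(f;z_0)=\bigcap_{\varepsilon>0}\overline{f(B(z_0,\varepsilon)\cap\Omega)}$. A continuum is a nonempty compact connected set. *)

theory Defs
  imports "HOL-Analysis.Analysis"
begin

text \<open>The extended plane is modelled through the complex plane: a domain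
  \<Omega> \<subseteq> Riemann sphere containing \<infinity> is represented by U = \<Omega> - {\<infinity>},
  an open connected subset of the plane with bounded complement.
  Its boundary in the sphere is the ordinary frontier of U.\<close>

definition jordan_curve :: "complex set \<Rightarrow> bool" where
  "jordan_curve J \<longleftrightarrow>
     (\<exists>g. simple_path g \<and> pathfinish g = pathstart g \<and> J = path_image g)"

definition ext_domain :: "complex set \<Rightarrow> bool" where
  "ext_domain U \<longleftrightarrow> open U \<and> connected U \<and> bounded (- U)"

text \<open>Finite part of the cluster set (closure taken in the plane).\<close>
definition cluster_set :: "(complex \<Rightarrow> complex) \<Rightarrow> complex set \<Rightarrow> complex \<Rightarrow> complex set" where
  "cluster_set f U z0 = (\<Inter>\<epsilon>\<in>{0<..}. closure (f ` (ball z0 \<epsilon> \<inter> U)))"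

end

theory Submission
  imports Defs
begin

text \<open>The heart of the argument is that U is locally connected at every boundary point z0:
  points of U close to z0 can be joined inside U \<inter> ball z0 \<epsilon>. If they could not, then by
  Janiszewski's theorem some component C of frontier U \<union> - ball z0 \<epsilon> would separate them.
  C cannot lie in frontier U, since U is connected. Otherwise C reaches the outside of the ball,
  and then it cannot meet any component of frontier U near z0 other than the component D0
  through z0: the finiteness hypothesis makes those components small, so a clopen part of the
  compact set frontier U cuts them off. Hence near z0 C only meets D0, a Jordan curve or a point,
  which separates no two nearby points of U locally. Given local connectivity, the cluster set is a
  decreasing intersection of closures of images of connected sets; they are compact because
  f is bounded near z0 (g tends to infinity at infinity), so the cluster set is a continuum.\<close>

lemma connected_component_clopen_separation:
  fixes X :: "'a::metric_space set"
  assumes "compact X" "x \<in> X" "closed Z" "connected_component_set X x \<inter> Z = {}"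
  obtains Q where "Q \<subseteq> X" "x \<in> Q" "Q \<inter> Z = {}" "closed Q" "closed (X - Q)"
proof -
  define T where "T = top_of_set X"
  define C where "C = quasi_component_of_set T x"
  have CQ: "C \<in> quasi_components_of T"
    unfolding C_def quasi_components_of_def T_def using assms(2) by auto
  moreover have "quasi_components_of T = connected_components_of T"
    unfolding T_def using assms(1)
    by (intro quasi_eq_connected_components_of)
       (simp add: compact_space_subtopology Hausdorff_space_subtopology)
  ultimately have "connectedin T C"
    using connectedin_connected_components_of by auto
  then have "connected C" "C \<subseteq> X"
    unfolding T_def by (auto simp: connectedin_subtopology)
  moreover have "x \<in> C" unfolding C_def T_def using assms(2) by simp
  ultimately have "C \<subseteq> connected_component_set X x"
    by (meson connected_component_maximal)
  then have "disjnt C (X \<inter> Z)" using assms(4) by (auto simp: disjnt_def)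
  moreover have "compactin T (X \<inter> Z)" unfolding T_def
    by (simp add: compactin_subtopology assms compact_Int_closed)
  ultimately have "separated_between T C (X \<inter> Z)"
    using separated_between_quasi_component_compact[OF CQ] by blast
  then obtain A B where AB: "openin T A" "openin T B" "A \<union> B = X" "disjnt A B"
    "C \<subseteq> A" "X \<inter> Z \<subseteq> B"
    unfolding separated_between_def T_def by auto
  have "A = X - B" "B = X - A" using AB(3,4) by (auto simp: disjnt_def)
  then have "closedin T A" "closedin T B"
    using AB(1,2) closedin_diff[of T X] unfolding T_def
    by (metis closedin_topspace topspace_euclidean_subtopology)+
  then have "closed A" "closed B"
    unfolding T_def using assms(1) closedin_closed_trans compact_imp_closed by blast+
  then show ?thesis
    using that[of A] AB \<open>x \<in> C\<close> \<open>B = X - A\<close> by (auto simp: disjnt_def)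
qed

lemma connected_subset_clopen_piece:
  assumes "connected C" "C \<subseteq> X \<union> K" "C \<inter> Q \<noteq> {}"
    and "Q \<subseteq> X" "closed Q" "closed (X - Q)" "closed K" "Q \<inter> K = {}"
  shows "C \<subseteq> Q"
proof (rule ccontr)
  assume "\<not> C \<subseteq> Q"
  then have "C \<inter> ((X - Q) \<union> K) \<noteq> {}" using assms(2) by auto
  moreover have "C \<subseteq> Q \<union> ((X - Q) \<union> K)" "Q \<inter> ((X - Q) \<union> K) \<inter> C = {}"
    using assms(2,4,8) by auto
  moreover have "closed ((X - Q) \<union> K)" using assms(6,7) by blast
  ultimately show False
    using assms(1,3,5) unfolding connected_closed by (metis inf_commute)
qed

lemma jordan_curve_compact: "jordan_curve J \<Longrightarrow> compact J"
  unfolding jordan_curve_def using compact_simple_path_image by auto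

lemma jordan_curve_loop_at:
  assumes "jordan_curve J" "z0 \<in> J"
  obtains h where "simple_path h" "h 0 = z0" "h 1 = z0" "path_image h = J"
proof -
  obtain \<gamma> where \<gamma>: "simple_path \<gamma>" "pathfinish \<gamma> = pathstart \<gamma>" "J = path_image \<gamma>"
    using assms(1) unfolding jordan_curve_def by blast
  then obtain u where u: "u \<in> {0..1}" "\<gamma> u = z0"
    using assms(2) unfolding path_image_def by auto
  show ?thesis
  proof (rule that[of "shiftpath u \<gamma>"])
    show "simple_path (shiftpath u \<gamma>)" using simple_path_shiftpath \<gamma> u by auto
    show "shiftpath u \<gamma> 0 = z0" "shiftpath u \<gamma> 1 = z0"
      using pathstart_shiftpath[of u \<gamma>] pathfinish_shiftpath[of u \<gamma>] u \<gamma>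
      unfolding pathstart_def pathfinish_def by auto
    show "path_image (shiftpath u \<gamma>) = J" using path_image_shiftpath u \<gamma> by auto
  qed
qed

text \<open>Parametrise J as a loop based at z0; by uniform continuity, the parameters near
  0 and 1 are mapped into the ball, and the image of the middle parameter interval is
  the required arc.\<close>
lemma jordan_curve_arc_outside_ball:
  assumes "jordan_curve J" "z0 \<in> J" "\<rho> > 0"
  obtains A where "compact A" "connected A" "A \<subseteq> J" "z0 \<notin> A" "J - ball z0 \<rho> \<subseteq> A"
proof -
  obtain h where h: "simple_path h" "h 0 = z0" "h 1 = z0" "path_image h = J"
    using jordan_curve_loop_at assms(1,2) by blast
  have "continuous_on {0..1} h" using h(1) unfolding simple_path_def path_def by auto
  have cont: "continuous_on {t..1-t} h" if "t \<ge> 0" for t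
    using that by (intro continuous_on_subset[OF \<open>continuous_on {0..1} h\<close>]) auto
  have "uniformly_continuous_on {0..1} h"
    using \<open>continuous_on {0..1} h\<close> by (simp add: compact_uniformly_continuous)
  then obtain \<tau> where \<tau>: "\<tau> > 0"
    "\<And>s t. s \<in> {0..1} \<Longrightarrow> t \<in> {0..1} \<Longrightarrow> dist t s < \<tau> \<Longrightarrow> dist (h t) (h s) < \<rho>"
    unfolding uniformly_continuous_on_def using assms(3) by metis
  define t0 where "t0 = min (\<tau>/2) (1/4)"
  have t0: "t0 > 0" "t0 \<le> 1/4" "t0 < \<tau>" using \<tau> unfolding t0_def by auto
  show ?thesis
  proof (rule that[of "h ` {t0..1-t0}"])
    show "compact (h ` {t0..1-t0})" "connected (h ` {t0..1-t0})"
      using cont t0 by (auto intro: compact_continuous_image connected_continuous_image)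
    show "h ` {t0..1-t0} \<subseteq> J"
      using t0 h(4) unfolding path_image_def by auto
    show "z0 \<notin> h ` {t0..1-t0}"
    proof
      assume "z0 \<in> h ` {t0..1-t0}"
      then obtain t where t: "t \<in> {t0..1-t0}" "h t = z0" by auto
      have "loop_free h" using h(1) unfolding simple_path_def by auto
      moreover have "t \<in> {0..1}" using t t0 by auto
      ultimately have "t = 0 \<or> t = 1" using t h(2) unfolding loop_free_def by force
      then show False using t t0 by auto
    qed
    show "J - ball z0 \<rho> \<subseteq> h ` {t0..1-t0}"
    proof
      fix x assume x: "x \<in> J - ball z0 \<rho>"
      then obtain t where t: "t \<in> {0..1}" "h t = x" using h(4) unfolding path_image_def by auto
      have "\<not> dist t s < \<tau>" if "s \<in> {0, 1}" for s
        using \<tau>(2)[of s t] that t x h(2,3) by (auto simp: dist_commute)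
      from this[of 0] this[of 1] have "t \<in> {t0..1-t0}" using t t0 by (auto simp: dist_real_def)
      then show "x \<in> h ` {t0..1-t0}" using t by auto
    qed
  qed
qed

text \<open>Janiszewski's theorem, applied to J and the closed set (arc) \<union> (outside of the
  ball), whose intersection is the connected arc.\<close>
lemma jordan_curve_local_connectivity:
  assumes "jordan_curve J" "z0 \<in> J" "\<rho> > 0"
  obtains \<delta> where "\<delta> > 0"
    "\<And>p q. p \<in> ball z0 \<delta> \<Longrightarrow> q \<in> ball z0 \<delta> \<Longrightarrow> connected_component (- J) p q
       \<Longrightarrow> connected_component (ball z0 \<rho> - J) p q"
proof -
  obtain A where A: "compact A" "connected A" "A \<subseteq> J" "z0 \<notin> A" "J - ball z0 \<rho> \<subseteq> A"
    using jordan_curve_arc_outside_ball assms by blast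
  define T where "T = A \<union> - ball z0 \<rho>"
  have "closed T"
    unfolding T_def using closed_Un[OF compact_imp_closed[OF A(1)] closed_Compl[OF open_ball]] .
  have "J \<inter> T = A" unfolding T_def using A(3,5) by auto
  obtain \<delta> where \<delta>: "\<delta> > 0" "ball z0 \<delta> \<subseteq> - A"
    using open_contains_ball[of "- A"] A(1,4) by (auto simp: compact_imp_closed open_Compl)
  show ?thesis
  proof (rule that[of "min \<delta> \<rho>"])
    show "min \<delta> \<rho> > 0" using \<delta> assms(3) by auto
    fix p q assume pq: "p \<in> ball z0 (min \<delta> \<rho>)" "q \<in> ball z0 (min \<delta> \<rho>)"
      and "connected_component (- J) p q"
    have "ball z0 (min \<delta> \<rho>) \<subseteq> - T" using \<delta> unfolding T_def by auto
    then have "connected_component (- T) p q"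
      using pq by (meson connected_ball connected_componentI)
    then have "connected_component (- (J \<union> T)) p q"
      using Janiszewski[of J T p q] \<open>connected_component (- J) p q\<close>
        jordan_curve_compact[OF assms(1)] \<open>closed T\<close> \<open>J \<inter> T = A\<close> A(2)
      by simp
    moreover have "- (J \<union> T) \<subseteq> ball z0 \<rho> - J" unfolding T_def by auto
    ultimately show "connected_component (ball z0 \<rho> - J) p q"
      using connected_component_of_subset by blast
  qed
qed

lemma jordan_or_point_local_connectivity:
  assumes "jordan_curve D \<or> D = {z0}" "z0 \<in> D" "\<rho> > 0"
  obtains \<delta> where "\<delta> > 0"
    "\<And>p q. p \<in> ball z0 \<delta> \<Longrightarrow> q \<in> ball z0 \<delta> \<Longrightarrow> connected_component (- D) p q
       \<Longrightarrow> connected_component (ball z0 \<rho> - D) p q"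
  using assms(1)
proof
  assume "jordan_curve D"
  then show ?thesis using jordan_curve_local_connectivity assms(2,3) that by metis
next
  assume D: "D = {z0}"
  have "aff_dim (ball z0 \<rho>) = 2" using aff_dim_open[of "ball z0 \<rho>"] assms(3) by simp
  then have "connected (ball z0 \<rho> - D)"
    unfolding D by (intro connected_punctured_convex) auto
  moreover have "p \<in> ball z0 \<rho> - D" "q \<in> ball z0 \<rho> - D"
    if "p \<in> ball z0 \<rho>" "q \<in> ball z0 \<rho>" "connected_component (- D) p q" for p q
    using that connected_component_in by auto
  ultimately show ?thesis
    using that[of \<rho>] assms(3) by (meson connected_componentI order_refl)
qed

text \<open>Only finitely many components of X are Jordan curves of diameter > \<epsilon>/4; those not
  through z0 keep a positive distance from z0, and every other component near z0 is small.\<close>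
lemma components_near_point_small:
  fixes X :: "complex set"
  assumes comps: "\<forall>C\<in>components X. jordan_curve C \<or> (\<exists>a. C = {a})"
    and fin: "\<forall>\<eta>>0. finite {J. J \<subseteq> X \<and> jordan_curve J \<and> diameter J > \<eta>}"
    and "\<epsilon> > 0"
  obtains r where "r > 0" "r \<le> \<epsilon>"
    "\<And>x. x \<in> X \<inter> ball z0 r \<Longrightarrow> z0 \<notin> connected_component_set X x
       \<Longrightarrow> connected_component_set X x \<subseteq> ball z0 \<epsilon>"
proof -
  define Big where "Big = {J. J \<subseteq> X \<and> jordan_curve J \<and> diameter J > \<epsilon>/4 \<and> z0 \<notin> J}"
  have "finite {J. J \<subseteq> X \<and> jordan_curve J \<and> diameter J > \<epsilon>/4}"
    using fin \<open>\<epsilon> > 0\<close> by (metis divide_pos_pos zero_less_numeral)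
  then have "finite Big" by (rule finite_subset[rotated]) (auto simp: Big_def)
  then have "closed (\<Union>Big)"
    by (intro closed_Union) (auto simp: Big_def jordan_curve_compact compact_imp_closed)
  moreover have "z0 \<notin> \<Union>Big" unfolding Big_def by auto
  ultimately obtain r0 where r0: "r0 > 0" "ball z0 r0 \<subseteq> - \<Union>Big"
    by (meson ComplI open_Compl open_contains_ball_eq)
  define r where "r = min r0 (\<epsilon>/2)"
  show ?thesis
  proof (rule that[of r])
    show "r > 0" "r \<le> \<epsilon>" using r0 \<open>\<epsilon> > 0\<close> unfolding r_def by auto
    fix x assume x: "x \<in> X \<inter> ball z0 r" and z0: "z0 \<notin> connected_component_set X x"
    define D where "D = connected_component_set X x"
    have "D \<in> components X" "x \<in> D" "D \<subseteq> X"
      unfolding D_def using x by (auto simp: componentsI connected_component_subset)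
    then consider a where "D = {a}" | "jordan_curve D" "diameter D > \<epsilon>/4"
      | "jordan_curve D" "diameter D \<le> \<epsilon>/4"
      using comps by force
    then show "connected_component_set X x \<subseteq> ball z0 \<epsilon>"
    proof cases
      case 1
      then show ?thesis using x \<open>x \<in> D\<close> \<open>r \<le> \<epsilon>\<close> unfolding D_def by auto
    next
      case 2
      then have "D \<in> Big" using \<open>D \<subseteq> X\<close> z0 unfolding Big_def D_def by auto
      then show ?thesis using r0 x \<open>x \<in> D\<close> unfolding r_def by auto
    next
      case 3
      have "dist z0 y < \<epsilon>" if "y \<in> D" for y
      proof -
        have "dist x y \<le> \<epsilon>/4"
          using diameter_bounded_bound[OF compact_imp_bounded[OF jordan_curve_compact] \<open>x \<in> D\<close> that] 3
          by linarith
        moreover have "dist z0 x < \<epsilon>/2" using x unfolding r_def by auto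
        ultimately show ?thesis using dist_triangle[of z0 y x] \<open>\<epsilon> > 0\<close> by linarith
      qed
      then show ?thesis unfolding D_def by auto
    qed
  qed
qed

definition locally_connected_near :: "'a::metric_space set \<Rightarrow> 'a \<Rightarrow> bool" where
  "locally_connected_near U z \<longleftrightarrow>
     (\<forall>\<epsilon>>0. \<exists>\<delta>>0. \<forall>p\<in>U \<inter> ball z \<delta>. \<forall>q\<in>U \<inter> ball z \<delta>.
        connected_component (U \<inter> ball z \<epsilon>) p q)"

lemma connected_component_Int_of_Diff_frontier:
  fixes S U :: "'a::real_normed_vector set"
  assumes "connected_component (S - frontier U) p q" "p \<in> U"
  shows "connected_component (U \<inter> S) p q"
proof -
  obtain T where T: "connected T" "T \<subseteq> S - frontier U" "p \<in> T" "q \<in> T"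
    using assms(1) unfolding connected_component_def by blast
  have "T \<subseteq> U"
  proof (rule ccontr)
    assume "\<not> T \<subseteq> U"
    then have "T \<inter> frontier U \<noteq> {}"
      using connected_Int_frontier[OF T(1), of U] T(3) assms(2) by blast
    then show False using T(2) by blast
  qed
  then show ?thesis using T connected_componentI[of T "U \<inter> S"] by blast
qed

text \<open>A clopen part of X around the component of x that stays inside the ball cuts C off
  from the outside of the ball.\<close>
lemma component_through_small_component_subset:
  fixes X :: "'a::metric_space set"
  assumes "compact X" "C \<in> components (X \<union> - ball z \<epsilon>)" "x \<in> C" "x \<in> X"
    and "connected_component_set X x \<subseteq> ball z \<epsilon>"
  shows "C \<subseteq> X"
proof -
  have "connected_component_set X x \<inter> - ball z \<epsilon> = {}" using assms(5) by blast
  then obtain Q where Q: "Q \<subseteq> X" "x \<in> Q" "Q \<inter> - ball z \<epsilon> = {}" "closed Q" "closed (X - Q)"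
    by (rule connected_component_clopen_separation[OF assms(1,4) closed_Compl[OF open_ball]])
  have "C \<subseteq> Q"
  proof (rule connected_subset_clopen_piece)
    show "connected C" "C \<subseteq> X \<union> - ball z \<epsilon>"
      using in_components_connected[OF assms(2)] in_components_subset[OF assms(2)] .
  qed (use Q assms(3) in auto)
  then show ?thesis using Q(1) by blast
qed

lemma connected_component_Int_ball_of_nonseparating:
  fixes U :: "'a::euclidean_space set"
  assumes "open U" "connected U" "p \<in> U" "q \<in> U"
    and "\<And>C. C \<in> components (frontier U \<union> - ball z \<epsilon>) \<Longrightarrow> \<not> C \<subseteq> frontier U
           \<Longrightarrow> connected_component (- C) p q"
  shows "connected_component (U \<inter> ball z \<epsilon>) p q"
proof -
  have "frontier U \<inter> U = {}" using assms(1) by (simp add: frontier_disjoint_eq)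
  have no_sep: "connected_component (- C) p q"
    if "C \<in> components (frontier U \<union> - ball z \<epsilon>)" for C
  proof (cases "C \<subseteq> frontier U")
    case True
    then have "U \<subseteq> - C" using \<open>frontier U \<inter> U = {}\<close> by blast
    then show ?thesis using assms(2-4) by (meson connected_componentI)
  next
    case False
    then show ?thesis by (rule assms(5)[OF that])
  qed
  have "connected_component (- (frontier U \<union> - ball z \<epsilon>)) p q"
  proof (rule ccontr)
    assume "\<not> connected_component (- (frontier U \<union> - ball z \<epsilon>)) p q"
    moreover have "closed (frontier U \<union> - ball z \<epsilon>)" by (intro closed_Un) auto
    ultimately obtain C where "C \<in> components (frontier U \<union> - ball z \<epsilon>)"
      "\<not> connected_component (- C) p q"
      using separation_by_component_closed_pointwise by blast
    then show False using no_sep by blast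
  qed
  moreover have "- (frontier U \<union> - ball z \<epsilon>) = ball z \<epsilon> - frontier U" by auto
  ultimately show ?thesis
    using connected_component_Int_of_Diff_frontier[of "ball z \<epsilon>" U p q] assms(3) by simp
qed

lemma locally_connected_near_frontier_point:
  fixes U :: "complex set"
  assumes "open U" "connected U" "bounded (frontier U)"
    and comps: "\<forall>C\<in>components (frontier U). jordan_curve C \<or> (\<exists>a. C = {a})"
    and fin: "\<forall>\<epsilon>>0. finite {J. J \<subseteq> frontier U \<and> jordan_curve J \<and> diameter J > \<epsilon>}"
    and "z0 \<in> frontier U"
  shows "locally_connected_near U z0"
  unfolding locally_connected_near_def
proof (intro allI impI)
  fix \<epsilon> :: real assume "\<epsilon> > 0"
  define X where "X = frontier U"
  have "compact X" "X \<inter> U = {}" "z0 \<in> X"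
    using assms(1,3,6) unfolding X_def
    by (auto simp: compact_eq_bounded_closed frontier_disjoint_eq)
  have compsX: "\<forall>C\<in>components X. jordan_curve C \<or> (\<exists>a. C = {a})"
    and finX: "\<forall>\<epsilon>>0. finite {J. J \<subseteq> X \<and> jordan_curve J \<and> diameter J > \<epsilon>}"
    using comps fin unfolding X_def .
  define D0 where "D0 = connected_component_set X z0"
  have "D0 \<in> components X" "z0 \<in> D0" "D0 \<subseteq> X"
    using \<open>z0 \<in> X\<close> unfolding D0_def by (auto simp: componentsI connected_component_subset)
  then have "jordan_curve D0 \<or> D0 = {z0}"
    using compsX by auto
  obtain r where r: "r > 0" "r \<le> \<epsilon>"
    "\<And>x. x \<in> X \<inter> ball z0 r \<Longrightarrow> z0 \<notin> connected_component_set X x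
       \<Longrightarrow> connected_component_set X x \<subseteq> ball z0 \<epsilon>"
    using components_near_point_small[OF compsX finX \<open>\<epsilon> > 0\<close>] by blast
  obtain \<delta> where \<delta>: "\<delta> > 0"
    "\<And>p q. p \<in> ball z0 \<delta> \<Longrightarrow> q \<in> ball z0 \<delta> \<Longrightarrow> connected_component (- D0) p q
       \<Longrightarrow> connected_component (ball z0 r - D0) p q"
    by (rule jordan_or_point_local_connectivity[OF \<open>jordan_curve D0 \<or> D0 = {z0}\<close> \<open>z0 \<in> D0\<close> r(1)])
      (rule that)
  have C_avoids: "C \<inter> (ball z0 r - D0) = {}"
    if "C \<in> components (X \<union> - ball z0 \<epsilon>)" "\<not> C \<subseteq> X" for C
  proof (rule ccontr)
    assume "C \<inter> (ball z0 r - D0) \<noteq> {}"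
    then obtain x where x: "x \<in> C" "x \<in> ball z0 r" "x \<notin> D0" by auto
    then have "x \<in> X"
      using in_components_subset[OF that(1)] r(2) by auto
    moreover have "z0 \<notin> connected_component_set X x"
      using x(3) unfolding D0_def by (metis connected_component_sym mem_Collect_eq)
    ultimately have "connected_component_set X x \<subseteq> ball z0 \<epsilon>"
      using r(3) x(2) by blast
    then show False
      using component_through_small_component_subset[OF \<open>compact X\<close> that(1) x(1) \<open>x \<in> X\<close>]
        that(2)
      by blast
  qed
  have "connected_component (U \<inter> ball z0 \<epsilon>) p q"
    if "p \<in> U \<inter> ball z0 \<delta>" "q \<in> U \<inter> ball z0 \<delta>" for p q
  proof (rule connected_component_Int_ball_of_nonseparating)
    have "U \<subseteq> - D0" using \<open>X \<inter> U = {}\<close> \<open>D0 \<subseteq> X\<close> by auto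
    then have "connected_component (ball z0 r - D0) p q"
      using \<delta>(2) that \<open>connected U\<close> by (meson IntD1 IntD2 connected_componentI)
    moreover have "ball z0 r - D0 \<subseteq> - C"
      if "C \<in> components (frontier U \<union> - ball z0 \<epsilon>)" "\<not> C \<subseteq> frontier U" for C
      using C_avoids[of C] that unfolding X_def by blast
    ultimately show "connected_component (- C) p q"
      if "C \<in> components (frontier U \<union> - ball z0 \<epsilon>)" "\<not> C \<subseteq> frontier U" for C
      using that connected_component_of_subset by blast
  qed (use assms(1,2) that in auto)
  then show "\<exists>\<delta>>0. \<forall>p\<in>U \<inter> ball z0 \<delta>. \<forall>q\<in>U \<inter> ball z0 \<delta>.
      connected_component (U \<inter> ball z0 \<epsilon>) p q"
    using \<delta>(1) by blast
qed

lemma homeomorphism_image_bounded: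
  fixes f :: "'a::real_normed_vector \<Rightarrow> 'b::real_normed_vector" and g :: "'b \<Rightarrow> 'a"
  assumes "homeomorphism U V f g" "filterlim g at_infinity (inf at_infinity (principal V))"
    and "bounded B"
  shows "bounded (f ` (B \<inter> U))"
proof -
  obtain b where b: "b > 0" "\<And>z. z \<in> B \<Longrightarrow> norm z < b"
    using assms(3) by (meson bounded_pos_less)
  have "eventually (\<lambda>w. b \<le> norm (g w)) (inf at_infinity (principal V))"
    using assms(2) b(1) filterlim_at_infinity[of 0 g] by auto
  then obtain R where R: "\<And>w. R \<le> norm w \<Longrightarrow> w \<in> V \<Longrightarrow> b \<le> norm (g w)"
    unfolding eventually_inf_principal eventually_at_infinity by blast
  have "norm (f z) < R" if "z \<in> B \<inter> U" for z
  proof -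
    have "f z \<in> V" "g (f z) = z"
      using assms(1) that unfolding homeomorphism_def by auto
    then show ?thesis using R[of "f z"] b(2)[of z] that by force
  qed
  then show ?thesis unfolding bounded_iff by (metis imageE less_imp_le)
qed

lemma locally_connected_near_connected_nbhd:
  assumes "locally_connected_near U z" "z \<in> closure U" "\<epsilon> > 0"
  obtains \<delta> W where "\<delta> > 0" "connected W" "U \<inter> ball z \<delta> \<subseteq> W" "W \<subseteq> U \<inter> ball z \<epsilon>"
proof -
  obtain \<delta> where \<delta>: "\<delta> > 0"
    "\<forall>p\<in>U \<inter> ball z \<delta>. \<forall>q\<in>U \<inter> ball z \<delta>. connected_component (U \<inter> ball z \<epsilon>) p q"
    using assms(1,3) unfolding locally_connected_near_def by blast
  obtain p where "p \<in> U \<inter> ball z \<delta>"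
    using assms(2) \<delta>(1) unfolding closure_approachable by (metis IntI dist_commute mem_ball)
  show ?thesis
  proof (rule that)
    show "U \<inter> ball z \<delta> \<subseteq> connected_component_set (U \<inter> ball z \<epsilon>) p"
      using \<delta>(2) \<open>p \<in> U \<inter> ball z \<delta>\<close> by blast
    show "connected_component_set (U \<inter> ball z \<epsilon>) p \<subseteq> U \<inter> ball z \<epsilon>"
      by (rule connected_component_subset)
  qed (use \<delta>(1) in auto)
qed

text \<open>The cluster set is the intersection of the closed sets B e = closure (f ` (ball z0 e \<inter> U)),
  which need not be connected. Local connectivity supplies connected W with
  U \<inter> ball z0 (d e) \<subseteq> W \<subseteq> U \<inter> ball z0 e; along a sequence with e (n + 1) \<le> d (e n) the
  compact connected sets closure (f ` W) are nested and have the same intersection.\<close>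
lemma cluster_set_continuum:
  fixes f :: "complex \<Rightarrow> complex"
  assumes "continuous_on U f" "z0 \<in> closure U" "locally_connected_near U z0"
    and "r > 0" "bounded (f ` (ball z0 r \<inter> U))"
  shows "cluster_set f U z0 \<noteq> {} \<and> compact (cluster_set f U z0) \<and> connected (cluster_set f U z0)"
proof -
  define B where "B e = closure (f ` (ball z0 e \<inter> U))" for e
  have B_mono: "B e \<subseteq> B e'" if "e \<le> e'" for e e'
    unfolding B_def using that by (intro closure_mono image_mono) auto
  have "\<exists>\<delta> W. \<delta> > 0 \<and> connected W \<and> U \<inter> ball z0 \<delta> \<subseteq> W \<and> W \<subseteq> U \<inter> ball z0 e"
    if "e > 0" for e
  proof -
    obtain \<delta> W where "\<delta> > 0" "connected W" "U \<inter> ball z0 \<delta> \<subseteq> W" "W \<subseteq> U \<inter> ball z0 e"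
      using locally_connected_near_connected_nbhd[OF assms(3,2) \<open>e > 0\<close>] .
    then show ?thesis by blast
  qed
  then obtain d W where dW: "\<And>e. e > 0 \<Longrightarrow>
      d e > 0 \<and> connected (W e) \<and> U \<inter> ball z0 (d e) \<subseteq> W e \<and> W e \<subseteq> U \<inter> ball z0 e"
    by metis
  define es where "es = rec_nat r (\<lambda>_ e. min (d e) (e / 2))"
  have es_0: "es 0 = r" and es_Suc: "es (Suc n) = min (d (es n)) (es n / 2)" for n
    unfolding es_def by simp_all
  have es_pos: "es n > 0" for n
  proof (induction n)
    case (Suc n)
    then show ?case using dW[OF Suc] by (simp add: es_Suc)
  qed (simp add: es_0 assms(4))
  have es_le: "es n \<le> r / 2 ^ n" for n
  proof (induction n)
    case (Suc n)
    have "es (Suc n) \<le> es n / 2" by (simp add: es_Suc)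
    also have "\<dots> \<le> r / 2 ^ Suc n" using Suc by simp
    finally show ?case .
  qed (simp add: es_0)
  define S where "S n = closure (f ` W (es n))" for n
  have S_le: "S n \<subseteq> B (es n)" for n
    unfolding S_def B_def using dW[OF es_pos] by (intro closure_mono image_mono) auto
  have le_S: "B (es (Suc n)) \<subseteq> S n" for n
  proof -
    have "B (es (Suc n)) \<subseteq> B (d (es n))" using B_mono es_Suc by simp
    also have "\<dots> \<subseteq> S n"
      unfolding S_def B_def using dW[OF es_pos] by (intro closure_mono image_mono) auto
    finally show ?thesis .
  qed
  have S_nest: "S n \<subseteq> S m" if "m \<le> n" for m n
  proof -
    have "S (Suc k) \<subseteq> S k" for k using S_le[of "Suc k"] le_S[of k] by blast
    then show ?thesis using lift_Suc_antimono_le[of S, OF _ that] by blast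
  qed
  have S_compact: "compact (S n)" for n
  proof -
    have "es n \<le> r" using es_le[of n] divide_left_mono[of 1 "2 ^ n" r] assms(4) by simp
    then have "W (es n) \<subseteq> ball z0 r \<inter> U" using dW[OF es_pos, of n] by auto
    then have "f ` W (es n) \<subseteq> f ` (ball z0 r \<inter> U)" by (rule image_mono)
    then show ?thesis
      unfolding S_def using assms(5) by (meson bounded_subset compact_closure)
  qed
  have S_connected: "connected (S n)" for n
  proof -
    have "continuous_on (W (es n)) f" using dW[OF es_pos] assms(1) continuous_on_subset by blast
    then show ?thesis
      unfolding S_def using dW[OF es_pos]
      by (intro connected_imp_connected_closure connected_continuous_image) auto
  qed
  have S_nonempty: "S n \<noteq> {}" for n
  proof -
    obtain p where "p \<in> U" "dist p z0 < d (es n)"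
      using assms(2) dW[OF es_pos] unfolding closure_approachable by blast
    then show ?thesis unfolding S_def using dW[OF es_pos, of n] by (auto simp: dist_commute)
  qed
  have "cluster_set f U z0 = \<Inter> (range S)"
  proof
    show "cluster_set f U z0 \<subseteq> \<Inter> (range S)"
      using le_S es_pos unfolding cluster_set_def B_def by blast
    have "\<exists>n. S n \<subseteq> B e" if "e > 0" for e
    proof -
      obtain n where "(1/2::real)^n < e / r"
        using real_arch_pow_inv[of "e / r" "1/2"] \<open>e > 0\<close> assms(4) by auto
      then have "r / 2 ^ n < e" using assms(4) by (simp add: field_simps power_divide)
      then have "es n \<le> e" using es_le[of n] by linarith
      then show ?thesis using S_le B_mono by blast
    qed
    then show "\<Inter> (range S) \<subseteq> cluster_set f U z0" unfolding cluster_set_def B_def by blast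
  qed
  moreover have "compact (\<Inter> (range S))" using S_compact by (intro compact_Inter) auto
  ultimately show ?thesis
    using compact_nest[of S] connected_nest[of S] S_compact S_connected S_nonempty S_nest
    by simp
qed

theorem proposition3p5:
  fixes U V :: "complex set" and f g :: "complex \<Rightarrow> complex" and z0 :: complex
  assumes "ext_domain U" and "ext_domain V"
    and "homeomorphism U V f g"
    and "filterlim f at_infinity (inf at_infinity (principal U))"
    and "filterlim g at_infinity (inf at_infinity (principal V))"
    and "\<forall>C\<in>components (frontier U). jordan_curve C \<or> (\<exists>a. C = {a})"
    and "\<forall>\<epsilon>>0. finite {J. J \<subseteq> frontier U \<and> jordan_curve J \<and> diameter J > \<epsilon>}"
    and "z0 \<in> frontier U"
  shows "(\<exists>\<epsilon>>0. bounded (f ` (ball z0 \<epsilon> \<inter> U)))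
         \<and> cluster_set f U z0 \<noteq> {} \<and> compact (cluster_set f U z0)
         \<and> connected (cluster_set f U z0)"
proof -
  have "open U" "connected U" "bounded (- U)"
    using assms(1) unfolding ext_domain_def by auto
  moreover have "frontier U \<subseteq> - U" using \<open>open U\<close> by (auto simp: frontier_def interior_open)
  ultimately have "bounded (frontier U)" using bounded_subset by blast
  have local_conn: "locally_connected_near U z0"
    using locally_connected_near_frontier_point[OF \<open>open U\<close> \<open>connected U\<close>
        \<open>bounded (frontier U)\<close> assms(6-8)] .
  have "continuous_on U f" using assms(3) unfolding homeomorphism_def by auto
  moreover have "z0 \<in> closure U" using assms(8) unfolding frontier_def by auto
  moreover have bounded_near: "bounded (f ` (ball z0 1 \<inter> U))"
    using homeomorphism_image_bounded[OF assms(3,5)] by simp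
  ultimately have "cluster_set f U z0 \<noteq> {} \<and> compact (cluster_set f U z0)
      \<and> connected (cluster_set f U z0)"
    by (rule cluster_set_continuum[OF _ _ local_conn zero_less_one])
  then show ?thesis using bounded_near zero_less_one by blast
qed

end
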